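(* Let $\tau$ be a finite topology on $X$ and let $H=G_1(\tau)$. If distinct $u,v\in X$ are $T_i$-adjacent for some $i\in\{1,2,3',3'',4\}$, then $\mathrm{dist}_H(u,v)\le i$, where $3'$ and $3''$ are read as $3$.
   Context: A finite topology $\tau$ on a finite set $X$ is a family of subsets containing $\emptyset,X$ and closed under unions and intersections. For $A\subseteq X$, $m_\tau(A)$ is the intersection of all open sets containing $A$, $m_\tau(x)=m_\tau(\{x\})$; $\ell_\tau(x)=X\setminus\bigcup\{U\in\tau:x\notin U\}$ and $m_\tau(\ell(x))=m_\tau(\ell_\tau(x))$. Distinct $x,y$ are $T_1$-adjacent if $m_\tau(x)\subseteq m_\tau(y)$ or $m_\tau(y)\subseteq m_\tau(x)$; $T_2$-adjacent if $m_\tau(x)\cap m_\tau(y)\ne\emptyset$; $T_{3'}$-adjacent if $m_\tau(x)\cap m_\tau(\ell(y))\ne\emptyset$ and $m_\tau(\ell(x))\cap m_\tau(y)\ne\emptyset$; $T_{3''}$-adjacent if the same with "or"; $T_4$-adjacent if $m_\tau(\ell(x))\cap m_\tau(\ell(y))\ne\emptyset$. $G_1(\tau)$ is the simple graph on $X$ in which distinct $x,y$ are adjacent iff they are $T_1$-adjacent. $\mathrm{dist}_H$ is graph distance in $H$. *)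

theory Defs
  imports Main "HOL-Library.Extended_Nat"
begin

definition finite_topology :: "'a set \<Rightarrow> 'a set set \<Rightarrow> bool" where
  "finite_topology X \<tau> \<longleftrightarrow> finite X \<and> \<tau> \<subseteq> Pow X \<and> {} \<in> \<tau> \<and> X \<in> \<tau> \<and>
     (\<forall>U\<in>\<tau>. \<forall>V\<in>\<tau>. U \<union> V \<in> \<tau>) \<and> (\<forall>U\<in>\<tau>. \<forall>V\<in>\<tau>. U \<inter> V \<in> \<tau>)"

definition mset :: "'a set set \<Rightarrow> 'a set \<Rightarrow> 'a set" where
  "mset \<tau> A = \<Inter> {U \<in> \<tau>. A \<subseteq> U}"

abbreviation mpt :: "'a set set \<Rightarrow> 'a \<Rightarrow> 'a set" where
  "mpt \<tau> x \<equiv> mset \<tau> {x}"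

definition ell :: "'a set \<Rightarrow> 'a set set \<Rightarrow> 'a \<Rightarrow> 'a set" where
  "ell X \<tau> x = X - \<Union> {U \<in> \<tau>. x \<notin> U}"

definition T1_adj :: "'a set set \<Rightarrow> 'a \<Rightarrow> 'a \<Rightarrow> bool" where
  "T1_adj \<tau> x y \<longleftrightarrow> x \<noteq> y \<and> (mpt \<tau> x \<subseteq> mpt \<tau> y \<or> mpt \<tau> y \<subseteq> mpt \<tau> x)"

definition T2_adj :: "'a set set \<Rightarrow> 'a \<Rightarrow> 'a \<Rightarrow> bool" where
  "T2_adj \<tau> x y \<longleftrightarrow> x \<noteq> y \<and> mpt \<tau> x \<inter> mpt \<tau> y \<noteq> {}"

definition T3'_adj :: "'a set \<Rightarrow> 'a set set \<Rightarrow> 'a \<Rightarrow> 'a \<Rightarrow> bool" where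
  "T3'_adj X \<tau> x y \<longleftrightarrow> x \<noteq> y \<and>
     mpt \<tau> x \<inter> mset \<tau> (ell X \<tau> y) \<noteq> {} \<and> mset \<tau> (ell X \<tau> x) \<inter> mpt \<tau> y \<noteq> {}"

definition T3''_adj :: "'a set \<Rightarrow> 'a set set \<Rightarrow> 'a \<Rightarrow> 'a \<Rightarrow> bool" where
  "T3''_adj X \<tau> x y \<longleftrightarrow> x \<noteq> y \<and>
     (mpt \<tau> x \<inter> mset \<tau> (ell X \<tau> y) \<noteq> {} \<or> mset \<tau> (ell X \<tau> x) \<inter> mpt \<tau> y \<noteq> {})"

definition T4_adj :: "'a set \<Rightarrow> 'a set set \<Rightarrow> 'a \<Rightarrow> 'a \<Rightarrow> bool" where
  "T4_adj X \<tau> x y \<longleftrightarrow> x \<noteq> y \<and> mset \<tau> (ell X \<tau> x) \<inter> mset \<tau> (ell X \<tau> y) \<noteq> {}"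

definition G1_edge :: "'a set \<Rightarrow> 'a set set \<Rightarrow> 'a \<Rightarrow> 'a \<Rightarrow> bool" where
  "G1_edge X \<tau> x y \<longleftrightarrow> x \<in> X \<and> y \<in> X \<and> T1_adj \<tau> x y"

definition is_walk :: "'a set \<Rightarrow> ('a \<Rightarrow> 'a \<Rightarrow> bool) \<Rightarrow> 'a list \<Rightarrow> bool" where
  "is_walk V E p \<longleftrightarrow> p \<noteq> [] \<and> set p \<subseteq> V \<and> (\<forall>i. Suc i < length p \<longrightarrow> E (p ! i) (p ! Suc i))"

text \<open>Graph distance (infinity if no walk exists).\<close>
definition gdist :: "'a set \<Rightarrow> ('a \<Rightarrow> 'a \<Rightarrow> bool) \<Rightarrow> 'a \<Rightarrow> 'a \<Rightarrow> enat" where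
  "gdist V E u v = Inf {enat (length p - 1) | p. is_walk V E p \<and> hd p = u \<and> last p = v}"

end

theory Submission
  imports Defs
begin

text \<open>Two points with comparable minimal neighbourhoods are equal or adjacent in G_1, so a chain
  of points in which consecutive minimal neighbourhoods are comparable bounds the distance of its
  endpoints by its number of steps. Minimal neighbourhoods are open, so y \<in> m(x) gives
  m(y) \<subseteq> m(x); a point w of \<ell>(v) has v \<in> m(w), hence m(v) \<subseteq> m(w); and m(\<ell>(v)) is the union of the
  m(w) with w \<in> \<ell>(v). Each kind of T_i-adjacency therefore yields a chain u = x_0, ..., x_i = v,
  whose inner points are witnesses of the nonempty intersection and points of \<ell>(u) or \<ell>(v).\<close>

lemma finite_topology_Inter:
  assumes "finite_topology X \<tau>" and "finite F" "F \<noteq> {}" "F \<subseteq> \<tau>"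
  shows "\<Inter>F \<in> \<tau>"
  using assms(2-4)
  by (induction F rule: finite_ne_induct) (use assms(1) in \<open>auto simp: finite_topology_def\<close>)

lemma finite_topology_Union:
  assumes "finite_topology X \<tau>" and "finite F" "F \<subseteq> \<tau>"
  shows "\<Union>F \<in> \<tau>"
  using assms(2-3)
  by (induction F rule: finite_induct) (use assms(1) in \<open>auto simp: finite_topology_def\<close>)

lemma subset_mset: "A \<subseteq> mset \<tau> A"
  unfolding mset_def by auto

lemma mset_least: "U \<in> \<tau> \<Longrightarrow> A \<subseteq> U \<Longrightarrow> mset \<tau> A \<subseteq> U"
  unfolding mset_def by auto

lemma mset_subset_space: "finite_topology X \<tau> \<Longrightarrow> A \<subseteq> X \<Longrightarrow> mset \<tau> A \<subseteq> X"
  by (rule mset_least) (auto simp: finite_topology_def)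

lemma mset_open:
  assumes "finite_topology X \<tau>" and "A \<subseteq> X"
  shows "mset \<tau> A \<in> \<tau>"
proof -
  have "finite \<tau>"
    using assms(1) finite_subset unfolding finite_topology_def by blast
  then show ?thesis
    unfolding mset_def using assms
    by (intro finite_topology_Inter[OF assms(1)]) (auto simp: finite_topology_def)
qed

lemma mpt_subset_mpt:
  assumes "finite_topology X \<tau>" and "x \<in> X" and "y \<in> mpt \<tau> x"
  shows "mpt \<tau> y \<subseteq> mpt \<tau> x"
  using assms mset_open[of X \<tau> "{x}"] by (intro mset_least) auto

lemma mset_eq_UN_mpt:
  assumes ft: "finite_topology X \<tau>" and "A \<subseteq> X"
  shows "mset \<tau> A = (\<Union>a\<in>A. mpt \<tau> a)"
proof
  have "finite A"
    using ft assms(2) finite_subset unfolding finite_topology_def by auto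
  then have "(\<Union>a\<in>A. mpt \<tau> a) \<in> \<tau>"
    using assms(2) mset_open[OF ft] by (intro finite_topology_Union[OF ft]) auto
  moreover have "A \<subseteq> (\<Union>a\<in>A. mpt \<tau> a)"
    using subset_mset[of "{_}" \<tau>] by blast
  ultimately show "mset \<tau> A \<subseteq> (\<Union>a\<in>A. mpt \<tau> a)"
    by (rule mset_least)
  show "(\<Union>a\<in>A. mpt \<tau> a) \<subseteq> mset \<tau> A"
  proof (rule UN_least)
    fix a assume "a \<in> A"
    then show "mpt \<tau> a \<subseteq> mset \<tau> A"
      using subset_mset[of A \<tau>] by (intro mset_least[OF mset_open[OF assms]]) auto
  qed
qed

lemma ell_subset_space: "ell X \<tau> v \<subseteq> X"
  unfolding ell_def by auto

lemma mpt_subset_mpt_if_mem_ell: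
  assumes ft: "finite_topology X \<tau>" and w: "w \<in> ell X \<tau> v"
  shows "mpt \<tau> v \<subseteq> mpt \<tau> w"
proof -
  have "w \<in> X"
    using w ell_subset_space[of X \<tau> v] by blast
  have "mpt \<tau> w \<in> \<tau>"
    using mset_open[OF ft] \<open>w \<in> X\<close> by simp
  moreover have "w \<in> mpt \<tau> w"
    using subset_mset[of "{w}" \<tau>] by simp
  ultimately have "v \<in> mpt \<tau> w"
    using w unfolding ell_def by auto
  then show ?thesis
    by (rule mpt_subset_mpt[OF ft \<open>w \<in> X\<close>])
qed

lemma mem_mset_ellE:
  assumes ft: "finite_topology X \<tau>" and "z \<in> mset \<tau> (ell X \<tau> v)"
  obtains w where "w \<in> X" "z \<in> X" "mpt \<tau> z \<subseteq> mpt \<tau> w" "mpt \<tau> v \<subseteq> mpt \<tau> w"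
proof -
  obtain w where w: "w \<in> ell X \<tau> v" "z \<in> mpt \<tau> w"
    using assms(2) unfolding mset_eq_UN_mpt[OF ft ell_subset_space] by blast
  have "w \<in> X"
    using w(1) ell_subset_space[of X \<tau> v] by blast
  moreover have "z \<in> X"
    using w(2) mset_subset_space[OF ft, of "{w}"] \<open>w \<in> X\<close> by blast
  ultimately show thesis
    using that mpt_subset_mpt[OF ft \<open>w \<in> X\<close> w(2)] mpt_subset_mpt_if_mem_ell[OF ft w(1)]
    by blast
qed

lemma is_walk_iff_successively:
  "is_walk V E p \<longleftrightarrow> p \<noteq> [] \<and> set p \<subseteq> V \<and> successively E p"
  unfolding is_walk_def successively_conv_nth by blast

lemma gdist_le_walk_length:
  "is_walk V E p \<Longrightarrow> gdist V E (hd p) (last p) \<le> enat (length p - 1)"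
  unfolding gdist_def by (blast intro: Inf_lower)

lemma gdist_le_if_successively_reflclp:
  assumes "xs \<noteq> []" and "set xs \<subseteq> V" and "successively E\<^sup>=\<^sup>= xs"
  shows "gdist V E (hd xs) (last xs) \<le> enat (length xs - 1)"
proof -
  let ?p = "remdups_adj xs"
  have "successively E ?p"
    using successively_remdups_adjI[OF assms(3)] distinct_adj_remdups_adj[of xs]
    unfolding successively_conv_nth distinct_adj_conv_nth by blast
  then have "is_walk V E ?p"
    using assms(1,2) by (simp add: is_walk_iff_successively)
  then have "gdist V E (hd xs) (last xs) \<le> enat (length ?p - 1)"
    using gdist_le_walk_length by fastforce
  also have "\<dots> \<le> enat (length xs - 1)"
    by (simp add: diff_le_mono)
  finally show ?thesis .
qed

lemma gdist_G1_le_chain: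
  assumes "xs \<noteq> []" and "set xs \<subseteq> X"
    and "successively (\<lambda>x y. mpt \<tau> x \<subseteq> mpt \<tau> y \<or> mpt \<tau> y \<subseteq> mpt \<tau> x) xs"
  shows "gdist X (G1_edge X \<tau>) (hd xs) (last xs) \<le> enat (length xs - 1)"
proof (rule gdist_le_if_successively_reflclp[OF assms(1,2)])
  show "successively (G1_edge X \<tau>)\<^sup>=\<^sup>= xs"
    using assms(3) by (rule successively_mono)
      (use assms(2) in \<open>auto simp: G1_edge_def T1_adj_def\<close>)
qed

context
  fixes X :: "'a set" and \<tau> :: "'a set set" and u v :: 'a
  assumes ft: "finite_topology X \<tau>" and u: "u \<in> X" and v: "v \<in> X"
begin

lemma gdist_G1_le_1_if_T1_adj:
  assumes "T1_adj \<tau> u v"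
  shows "gdist X (G1_edge X \<tau>) u v \<le> 1"
proof -
  have "gdist X (G1_edge X \<tau>) (hd [u, v]) (last [u, v]) \<le> enat (length [u, v] - 1)"
    using assms u v unfolding T1_adj_def by (intro gdist_G1_le_chain) auto
  then show ?thesis
    by (simp add: one_enat_def)
qed

lemma gdist_G1_le_2_if_T2_adj:
  assumes "T2_adj \<tau> u v"
  shows "gdist X (G1_edge X \<tau>) u v \<le> 2"
proof -
  obtain z where z: "z \<in> mpt \<tau> u" "z \<in> mpt \<tau> v"
    using assms unfolding T2_adj_def by blast
  have "z \<in> X"
    using z(1) mset_subset_space[OF ft, of "{u}"] u by blast
  then have "gdist X (G1_edge X \<tau>) (hd [u, z, v]) (last [u, z, v]) \<le> enat (length [u, z, v] - 1)"
    using u v mpt_subset_mpt[OF ft u z(1)] mpt_subset_mpt[OF ft v z(2)]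
    by (intro gdist_G1_le_chain) auto
  then show ?thesis
    by (simp add: numeral_eq_enat eval_nat_numeral)
qed

lemma gdist_G1_le_3_if_T3''_adj:
  assumes "T3''_adj X \<tau> u v"
  shows "gdist X (G1_edge X \<tau>) u v \<le> 3"
  using assms unfolding T3''_adj_def
proof (elim conjE disjE)
  assume "mpt \<tau> u \<inter> mset \<tau> (ell X \<tau> v) \<noteq> {}"
  then obtain z where z: "z \<in> mpt \<tau> u" "z \<in> mset \<tau> (ell X \<tau> v)"
    by blast
  obtain w where "w \<in> X" "z \<in> X" "mpt \<tau> z \<subseteq> mpt \<tau> w" "mpt \<tau> v \<subseteq> mpt \<tau> w"
    using mem_mset_ellE[OF ft z(2)] .
  then have "gdist X (G1_edge X \<tau>) (hd [u, z, w, v]) (last [u, z, w, v])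
      \<le> enat (length [u, z, w, v] - 1)"
    using u v mpt_subset_mpt[OF ft u z(1)] by (intro gdist_G1_le_chain) auto
  then show ?thesis
    by (simp add: numeral_eq_enat eval_nat_numeral)
next
  assume "mset \<tau> (ell X \<tau> u) \<inter> mpt \<tau> v \<noteq> {}"
  then obtain z where z: "z \<in> mset \<tau> (ell X \<tau> u)" "z \<in> mpt \<tau> v"
    by blast
  obtain w where "w \<in> X" "z \<in> X" "mpt \<tau> z \<subseteq> mpt \<tau> w" "mpt \<tau> u \<subseteq> mpt \<tau> w"
    using mem_mset_ellE[OF ft z(1)] .
  then have "gdist X (G1_edge X \<tau>) (hd [u, w, z, v]) (last [u, w, z, v])
      \<le> enat (length [u, w, z, v] - 1)"
    using u v mpt_subset_mpt[OF ft v z(2)] by (intro gdist_G1_le_chain) auto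
  then show ?thesis
    by (simp add: numeral_eq_enat eval_nat_numeral)
qed

lemma gdist_G1_le_4_if_T4_adj:
  assumes "T4_adj X \<tau> u v"
  shows "gdist X (G1_edge X \<tau>) u v \<le> 4"
proof -
  obtain z where z: "z \<in> mset \<tau> (ell X \<tau> u)" "z \<in> mset \<tau> (ell X \<tau> v)"
    using assms unfolding T4_adj_def by blast
  obtain w where "w \<in> X" "z \<in> X" "mpt \<tau> z \<subseteq> mpt \<tau> w" "mpt \<tau> u \<subseteq> mpt \<tau> w"
    using mem_mset_ellE[OF ft z(1)] .
  moreover obtain w' where "w' \<in> X" "mpt \<tau> z \<subseteq> mpt \<tau> w'" "mpt \<tau> v \<subseteq> mpt \<tau> w'"
    using mem_mset_ellE[OF ft z(2)] by metis
  ultimately have "gdist X (G1_edge X \<tau>) (hd [u, w, z, w', v]) (last [u, w, z, w', v])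
      \<le> enat (length [u, w, z, w', v] - 1)"
    using u v by (intro gdist_G1_le_chain) auto
  then show ?thesis
    by (simp add: numeral_eq_enat eval_nat_numeral)
qed

end

theorem lemma4p2:
  fixes X :: "'a set" and \<tau> :: "'a set set" and u v :: 'a
  assumes "finite_topology X \<tau>" and "u \<in> X" and "v \<in> X" and "u \<noteq> v"
  shows "(T1_adj \<tau> u v \<longrightarrow> gdist X (G1_edge X \<tau>) u v \<le> 1) \<and>
         (T2_adj \<tau> u v \<longrightarrow> gdist X (G1_edge X \<tau>) u v \<le> 2) \<and>
         (T3'_adj X \<tau> u v \<longrightarrow> gdist X (G1_edge X \<tau>) u v \<le> 3) \<and>
         (T3''_adj X \<tau> u v \<longrightarrow> gdist X (G1_edge X \<tau>) u v \<le> 3) \<and>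
         (T4_adj X \<tau> u v \<longrightarrow> gdist X (G1_edge X \<tau>) u v \<le> 4)"
proof -
  have "T3'_adj X \<tau> u v \<Longrightarrow> T3''_adj X \<tau> u v"
    unfolding T3'_adj_def T3''_adj_def by blast
  then show ?thesis
    using gdist_G1_le_1_if_T1_adj[OF assms(1-3)] gdist_G1_le_2_if_T2_adj[OF assms(1-3)]
      gdist_G1_le_3_if_T3''_adj[OF assms(1-3)] gdist_G1_le_4_if_T4_adj[OF assms(1-3)] by blast
qed

end
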